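(* Let $M,N\ge 0$. For every interval of rank two in the poset of shuffles $W_{MN}$, the labeling $\Lambda$ behaves in one of the following two ways. (1) If the interval is isomorphic to $C_2\times C_2$, then its two maximal chains $c_1,c_2$, with labels induced by $\Lambda$ (i.e., the labels of the two coverings in the interval, computed within any maximal chain of $W_{MN}$ containing the given rank-two subchain together with a fixed chain below and a fixed chain above the interval), satisfy $(l_1,l_2)$ for $c_1$ and $(l_2,l_1)$ for $c_2$, where $l_1\neq l_2$ are letters of $\mathcal{A}\cup\mathcal{X}$. (2) If the interval is isomorphic to $\Pi_3$, then its three maximal chains $\gamma_1,\gamma_2,\gamma_3$ have induced labels $(x_j,l)$, $(l,x_j)$ and $(x_j,x_j)$ respectively, for some $x_j\in\mathcal{X}$ and some $l\in\mathcal{A}\cup(\mathcal{X}\setminus\{x_j\})$.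
   Context: $C_2$ denotes the 2-element chain and $\Pi_3$ the lattice of set partitions of a 3-element set (a 5-element poset of rank two). Let $\mathcal{A}=\{a_1,\dots,a_M\}$ and $\mathcal{X}=\{x_1,\dots,x_N\}$ be disjoint sets. A shuffle word is a word (possibly empty) with distinct letters from $\mathcal{A}\cup\mathcal{X}$ in which the letters of $\mathcal{A}$ appear in increasing order of subscripts and likewise those of $\mathcal{X}$. The poset of shuffles $W_{MN}$ consists of all shuffle words ordered by the reflexive-transitive closure of: $w\lessdot w'$ iff $w'$ is obtained from $w$ by deleting a letter of $\mathcal{A}$ or inserting a letter of $\mathcal{X}$; $\hat0=a_1\cdots a_M$, $\hat1=x_1\cdots x_N$. For a maximal chain $c=(\hat0=w^0\lessdot\cdots\lessdot w^{M+N}=\hat1)$ define $\Lambda(c)=(\Lambda_1(c),\dots,\Lambda_{M+N}(c))$ by: (x) if $w^{i+1}$ is obtained from $w^i$ by inserting $x_k$, then $\Lambda_{i+1}(c)=x_k$; (xa) if $w^i=u\,x_k\,a_m\,v$ and $w^{i+1}=u\,x_k\,v$ and this is the first deletion along $c$, starting from $\hat0$, of a letter located immediately after $x_k$, then $\Lambda_{i+1}(c)=x_k$; (a) if $w^{i+1}$ is obtained by deleting $a_j\in\mathcal{A}$ and this is not of type (xa), then $\Lambda_{i+1}(c)=a_j$. *)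

theory Defs
  imports Main "HOL-Library.Disjoint_Sets"
begin

datatype letter = A nat | X nat

definition alphabet :: "nat \<Rightarrow> nat \<Rightarrow> letter set" where
  "alphabet M N = {A m | m. 1 \<le> m \<and> m \<le> M} \<union> {X k | k. 1 \<le> k \<and> k \<le> N}"

definition A_idx :: "letter list \<Rightarrow> nat list" where
  "A_idx w = concat (map (\<lambda>l. case l of A m \<Rightarrow> [m] | X _ \<Rightarrow> []) w)"

definition X_idx :: "letter list \<Rightarrow> nat list" where
  "X_idx w = concat (map (\<lambda>l. case l of X k \<Rightarrow> [k] | A _ \<Rightarrow> []) w)"

definition shuffle_word :: "nat \<Rightarrow> nat \<Rightarrow> letter list \<Rightarrow> bool" where
  "shuffle_word M N w \<longleftrightarrow> distinct w \<and> set w \<subseteq> alphabet M N \<and>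
     sorted_wrt (<) (A_idx w) \<and> sorted_wrt (<) (X_idx w)"

definition cov :: "nat \<Rightarrow> nat \<Rightarrow> letter list \<Rightarrow> letter list \<Rightarrow> bool" where
  "cov M N w w' \<longleftrightarrow> shuffle_word M N w \<and> shuffle_word M N w' \<and>
     ((\<exists>u v m. w = u @ A m # v \<and> w' = u @ v) \<or>
      (\<exists>u v k. w = u @ v \<and> w' = u @ X k # v))"

definition wle :: "nat \<Rightarrow> nat \<Rightarrow> letter list \<Rightarrow> letter list \<Rightarrow> bool" where
  "wle M N w w' \<longleftrightarrow> shuffle_word M N w \<and> (cov M N)\<^sup>*\<^sup>* w w'"

definition bottom :: "nat \<Rightarrow> letter list" where
  "bottom M = map A [1..<Suc M]"

definition top_word :: "nat \<Rightarrow> letter list" where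
  "top_word N = map X [1..<Suc N]"

definition chain_ft :: "nat \<Rightarrow> nat \<Rightarrow> letter list list \<Rightarrow> letter list \<Rightarrow> letter list \<Rightarrow> bool" where
  "chain_ft M N c a b \<longleftrightarrow> c \<noteq> [] \<and> hd c = a \<and> last c = b \<and>
     (\<forall>i. Suc i < length c \<longrightarrow> cov M N (c ! i) (c ! Suc i))"

definition maxchain :: "nat \<Rightarrow> nat \<Rightarrow> letter list list \<Rightarrow> bool" where
  "maxchain M N c \<longleftrightarrow> chain_ft M N c (bottom M) (top_word N)"

definition inserted :: "letter list \<Rightarrow> letter list \<Rightarrow> letter" where
  "inserted w w' = (THE l. l \<in> set w' \<and> l \<notin> set w)"

definition deleted :: "letter list \<Rightarrow> letter list \<Rightarrow> letter" where
  "deleted w w' = (THE l. l \<in> set w \<and> l \<notin> set w')"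

definition imm_after :: "letter list \<Rightarrow> nat \<Rightarrow> letter \<Rightarrow> bool" where
  "imm_after w k l \<longleftrightarrow> (\<exists>u v. w = u @ [X k, l] @ v)"

definition del_after :: "letter list list \<Rightarrow> nat \<Rightarrow> nat \<Rightarrow> bool" where
  "del_after c j k \<longleftrightarrow> length (c ! Suc j) < length (c ! j) \<and>
     imm_after (c ! j) k (deleted (c ! j) (c ! Suc j))"

text \<open>label c i is \<Lambda>_{i+1}(c), the label of the covering c!i \<lessdot> c!(i+1).\<close>
definition label :: "letter list list \<Rightarrow> nat \<Rightarrow> letter" where
  "label c i =
     (if length (c ! i) < length (c ! Suc i) then inserted (c ! i) (c ! Suc i)
      else if (\<exists>k. del_after c i k \<and> (\<forall>j<i. \<not> del_after c j k))
      then X (THE k. del_after c i k \<and> (\<forall>j<i. \<not> del_after c j k))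
      else deleted (c ! i) (c ! Suc i))"

definition rank_two :: "nat \<Rightarrow> nat \<Rightarrow> letter list \<Rightarrow> letter list \<Rightarrow> bool" where
  "rank_two M N u w \<longleftrightarrow> (\<exists>v. cov M N u v \<and> cov M N v w)"

definition interval :: "nat \<Rightarrow> nat \<Rightarrow> letter list \<Rightarrow> letter list \<Rightarrow> letter list set" where
  "interval M N u w = {v. wle M N u v \<and> wle M N v w}"

definition middles :: "nat \<Rightarrow> nat \<Rightarrow> letter list \<Rightarrow> letter list \<Rightarrow> letter list set" where
  "middles M N u w = {v. cov M N u v \<and> cov M N v w}"

text \<open>Induced labels of the maximal chain u \<lessdot> v \<lessdot> w of the interval, computed inside the maximal
  chain lo @ v # hi of W_MN (lo: chain from bottom to u, hi: chain from w to top).\<close>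
definition ind_labels :: "letter list list \<Rightarrow> letter list \<Rightarrow> letter list list \<Rightarrow> letter \<times> letter" where
  "ind_labels lo v hi = (label (lo @ v # hi) (length lo - 1), label (lo @ v # hi) (length lo))"

definition ord_iso :: "'a set \<Rightarrow> ('a \<Rightarrow> 'a \<Rightarrow> bool) \<Rightarrow> 'b set \<Rightarrow> ('b \<Rightarrow> 'b \<Rightarrow> bool) \<Rightarrow> bool" where
  "ord_iso I R J S \<longleftrightarrow> (\<exists>f. bij_betw f I J \<and> (\<forall>x\<in>I. \<forall>y\<in>I. R x y \<longleftrightarrow> S (f x) (f y)))"

definition C2xC2_le :: "bool \<times> bool \<Rightarrow> bool \<times> bool \<Rightarrow> bool" where
  "C2xC2_le p q \<longleftrightarrow> fst p \<le> fst q \<and> snd p \<le> snd q"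

definition Pi3 :: "nat set set set" where
  "Pi3 = {P. partition_on {0, 1, 2} P}"

definition refines :: "nat set set \<Rightarrow> nat set set \<Rightarrow> bool" where
  "refines P Q \<longleftrightarrow> (\<forall>p\<in>P. \<exists>q\<in>Q. p \<subseteq> q)"

end

theory Submission
  imports Defs
begin

(* Every covering deletes a letter a_m or inserts a letter x_k and raises #X - #A by one, so a
   rank-two interval [u, w] consists of u, w and an antichain of middle elements, and its
   isomorphism type is determined by the number of these.  Comparing u with w leaves three cases.
   Two deletions, or two insertions, commute: there are two middle elements and the two labels
   appear in both orders, because whether the deletion of a_m is labelled by the x_k in front of it
   does not depend on whether another a_n was deleted before.  A deletion of a_m and an insertion
   of x_k give the middle element u - a_m, whose chain is labelled (l, x_k), and the words v with
   v - x_k = u and v - a_m = w, whose chains start with x_k.  Such a v is unique, and its chain is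
   labelled (x_k, l), unless a_m in u and x_k in w sit in the same position; then both
   "a_m x_k" and "x_k a_m" occur there, and in the latter the fresh letter x_k labels the deletion
   of a_m, which yields Pi_3 with labels (x_k, l), (l, x_k) and (x_k, x_k). *)

section \<open>Bounded antichains\<close>

definition bounded_antichain :: "'a set \<Rightarrow> ('a \<Rightarrow> 'a \<Rightarrow> bool) \<Rightarrow> 'a \<Rightarrow> 'a \<Rightarrow> bool" where
  "bounded_antichain I R a b \<longleftrightarrow> (\<forall>x\<in>I. \<forall>y\<in>I. R x y \<longleftrightarrow> x = y \<or> x = a \<or> y = b)"

lemma ord_iso_bounded_antichain:
  assumes R: "bounded_antichain (set (a # b # xs)) R a b"
    and S: "bounded_antichain (set (c # d # ys)) S c d"
    and dist: "distinct (a # b # xs)" "distinct (c # d # ys)"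
    and len: "length xs = length ys"
  shows "ord_iso (set (a # b # xs)) R (set (c # d # ys)) S"
proof -
  let ?as = "a # b # xs" and ?cs = "c # d # ys"
  define idx where "idx = inv_into {..<length ?as} ((!) ?as)"
  define f where "f x = ?cs ! idx x" for x
  have nth_as: "bij_betw ((!) ?as) {..<length ?as} (set ?as)"
    using bij_betw_nth[OF dist(1)] by simp
  then have idx: "bij_betw idx (set ?as) {..<length ?as}"
    unfolding idx_def by (rule bij_betw_inv_into)
  have "bij_betw ((!) ?cs) {..<length ?as} (set ?cs)"
    using bij_betw_nth[OF dist(2)] len by simp
  then have f: "bij_betw f (set ?as) (set ?cs)"
    unfolding f_def using bij_betw_trans[OF idx] by (simp add: comp_def)
  have idx_nth: "idx (?as ! i) = i" if "i < length ?as" for i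
    unfolding idx_def using nth_as that by (simp add: bij_betw_def)
  have fa: "f a = c"
    using idx_nth[of 0] by (simp add: f_def)
  have fb: "f b = d"
    using idx_nth[of 1] by (simp add: f_def)
  show ?thesis
    unfolding ord_iso_def
  proof (intro exI conjI ballI)
    show "bij_betw f (set ?as) (set ?cs)" by (fact f)
    fix x y assume xy: "x \<in> set ?as" "y \<in> set ?as"
    have inj: "inj_on f (set ?as)"
      using f by (simp add: bij_betw_def)
    have "f x = f y \<longleftrightarrow> x = y" "f x = c \<longleftrightarrow> x = a" "f y = d \<longleftrightarrow> y = b"
      unfolding fa[symmetric] fb[symmetric] using inj_on_eq_iff[OF inj] xy by auto
    moreover have "f x \<in> set ?cs" "f y \<in> set ?cs"
      using f xy by (auto simp: bij_betw_def)
    ultimately show "R x y \<longleftrightarrow> S (f x) (f y)"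
      using R S xy unfolding bounded_antichain_def by metis
  qed
qed

lemma C2xC2_bounded_antichain:
  "bounded_antichain (set [(False, False), (True, True), (True, False), (False, True)])
     C2xC2_le (False, False) (True, True)"
  by (auto simp: bounded_antichain_def C2xC2_le_def)

lemma UNIV_bool_pair:
  "(UNIV :: (bool \<times> bool) set) = set [(False, False), (True, True), (True, False), (False, True)]"
  by auto

lemma partition_on_three:
  assumes P: "partition_on {0, 1, 2 :: nat} P"
  shows "P \<in> {{{0}, {1}, {2}}, {{0, 1}, {2}}, {{0, 2}, {1}}, {{1, 2}, {0}}, {{0, 1, 2}}}"
proof -
  define r where "r = {(x, y). \<exists>p\<in>P. x \<in> p \<and> y \<in> p}"
  have r: "equiv {0, 1, 2} r"
    using equiv_partition_on[OF P] unfolding r_def .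
  have "P = {0, 1, 2} // r"
    using partition_on_eq_quotient[OF P] unfolding r_def ..
  also have "\<dots> = {r``{0}, r``{1}, r``{2}}"
    by (auto simp: quotient_def)
  finally have classes: "P = {r``{0}, r``{1}, r``{2}}" .
  have class_eq: "r``{i} = (if (i, 0) \<in> r then {0} else {}) \<union> (if (i, 1) \<in> r then {1} else {})
      \<union> (if (i, 2) \<in> r then {2} else {})" for i
    using r by (auto simp: equiv_def refl_on_def)
  have r_refl: "(0, 0) \<in> r" "(1, 1) \<in> r" "(2, 2) \<in> r"
    using r by (auto simp: equiv_def refl_on_def)
  have r_sym: "(1, 0) \<in> r \<longleftrightarrow> (0, 1) \<in> r" "(2, 0) \<in> r \<longleftrightarrow> (0, 2) \<in> r" "(2, 1) \<in> r \<longleftrightarrow> (1, 2) \<in> r"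
    using r by (auto simp: equiv_def sym_def)
  have r_trans: "(i, j) \<in> r \<Longrightarrow> (j, k) \<in> r \<Longrightarrow> (i, k) \<in> r" for i j k
    using r by (auto simp: equiv_def elim: transE)
  show ?thesis
    unfolding classes class_eq
    using r_refl r_sym r_trans[of 0 1 2] r_trans[of 0 2 1] r_trans[of 1 0 2]
    by (cases "(0, 1) \<in> r"; cases "(0, 2) \<in> r"; cases "(1, 2) \<in> r") (simp_all add: insert_commute)
qed

lemma Pi3_eq:
  "Pi3 = set [{{0}, {1}, {2}}, {{0, 1, 2}}, {{0, 1}, {2}}, {{0, 2}, {1}}, {{1, 2}, {0}}]"
proof -
  have "Pi3 = {{{0}, {1}, {2}}, {{0, 1}, {2}}, {{0, 2}, {1}}, {{1, 2}, {0}}, {{0, 1, 2}}}"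
  proof
    show "Pi3 \<subseteq> {{{0}, {1}, {2}}, {{0, 1}, {2}}, {{0, 2}, {1}}, {{1, 2}, {0}}, {{0, 1, 2}}}"
      using partition_on_three by (simp add: Pi3_def subset_iff)
    show "{{{0}, {1}, {2}}, {{0, 1}, {2}}, {{0, 2}, {1}}, {{1, 2}, {0}}, {{0, 1, 2}}} \<subseteq> Pi3"
      by (auto simp: Pi3_def partition_on_def disjoint_def)
  qed
  then show ?thesis
    by (simp only: list.set insert_commute)
qed

(* A partition of {0, 1, 2} is determined by which singletons are among its blocks. *)
definition singleton_blocks :: "nat set set \<Rightarrow> bool \<times> bool \<times> bool" where
  "singleton_blocks P = ({0} \<in> P, {1} \<in> P, {2} \<in> P)"

lemma distinct_singleton_blocks:
  "distinct (map singleton_blocks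
     [{{0}, {1}, {2}}, {{0, 1, 2}}, {{0, 1}, {2}}, {{0, 2}, {1}}, {{1, 2}, {0}}])"
  by (simp add: singleton_blocks_def)

lemma Pi3_distinct:
  "distinct [{{0}, {1}, {2}}, {{0, 1, 2}}, {{0, 1}, {2}}, {{0, 2}, {1}}, {{1, 2}, {0 :: nat}}]"
  using distinct_singleton_blocks by (simp only: distinct_map)

lemma inj_on_singleton_blocks_Pi3: "inj_on singleton_blocks Pi3"
  using distinct_singleton_blocks unfolding Pi3_eq by (simp only: distinct_map)

lemma Pi3_bounded_antichain: "bounded_antichain Pi3 refines {{0}, {1}, {2}} {{0, 1, 2}}"
proof -
  have refines_iff: "refines P Q \<longleftrightarrow> singleton_blocks P = singleton_blocks Q
      \<or> singleton_blocks P = singleton_blocks {{0}, {1}, {2}}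
      \<or> singleton_blocks Q = singleton_blocks {{0, 1, 2}}"
    if "P \<in> Pi3" "Q \<in> Pi3" for P Q
    using that unfolding Pi3_eq
    by (simp only: list.set insert_iff empty_iff)
      (elim disjE; simp add: refines_def singleton_blocks_def)
  have "{{0}, {1}, {2}} \<in> Pi3" "{{0, 1, 2}} \<in> Pi3"
    unfolding Pi3_eq by simp_all
  then show ?thesis
    unfolding bounded_antichain_def using refines_iff
    by (simp add: inj_on_eq_iff[OF inj_on_singleton_blocks_Pi3])
qed

section \<open>Distinct words\<close>

lemma removeAll_eq_Nil_iff: "removeAll x xs = [] \<longleftrightarrow> set xs \<subseteq> {x}"
  by (induction xs) auto

lemma removeAll_eq_swap:
  assumes "distinct v" "distinct v'" "x \<noteq> y"
    and "removeAll x v = removeAll x v'" "removeAll y v = removeAll y v'"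
  shows "v = v' \<or> (\<exists>p q. {v, v'} = {p @ x # y # q, p @ y # x # q})"
  using assms
proof (induction v arbitrary: v')
  case Nil
  then have "set v' \<subseteq> {x} \<inter> {y}"
    by (metis removeAll.simps(1) removeAll_eq_Nil_iff Int_subset_iff)
  then show ?case
    using Nil.prems(3) by auto
next
  case (Cons a r)
  show ?case
  proof (cases v')
    case Nil
    then have "set (a # r) \<subseteq> {x} \<inter> {y}"
      using Cons.prems(4,5) by (metis removeAll.simps(1) removeAll_eq_Nil_iff Int_subset_iff)
    then show ?thesis
      using Cons.prems(3) by auto
  next
    case (Cons a' r')
    show ?thesis
    proof (cases "a = a'")
      case True
      then have "removeAll x r = removeAll x r'" "removeAll y r = removeAll y r'"
        using Cons.prems(4,5) \<open>v' = a' # r'\<close> by (auto split: if_splits)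
      then have "r = r' \<or> (\<exists>p q. {r, r'} = {p @ x # y # q, p @ y # x # q})"
        using Cons.IH Cons.prems(1-3) \<open>v' = a' # r'\<close> by simp
      then show ?thesis
      proof
        assume "\<exists>p q. {r, r'} = {p @ x # y # q, p @ y # x # q}"
        then obtain p q where "{r, r'} = {p @ x # y # q, p @ y # x # q}"
          by blast
        then have "{a # r, v'} = {(a # p) @ x # y # q, (a # p) @ y # x # q}"
          using True \<open>v' = a' # r'\<close> by (auto simp: doubleton_eq_iff)
        then show ?thesis
          by blast
      qed (use True \<open>v' = a' # r'\<close> in simp)
    next
      case False
      have "a = x \<or> a' = x" "a = y \<or> a' = y"
        using False Cons.prems(4,5) \<open>v' = a' # r'\<close> by (auto split: if_splits)
      then consider "a = x" "a' = y" | "a = y" "a' = x"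
        using Cons.prems(3) by blast
      then show ?thesis
      proof cases
        case 1
        have "r = y # removeAll x r'"
          using Cons.prems(1,3,4) \<open>v' = a' # r'\<close> 1 by simp
        moreover have "r' = x # removeAll x r'"
          using Cons.prems(2,3,5) \<open>v' = a' # r'\<close> 1 \<open>r = y # removeAll x r'\<close> by simp
        ultimately show ?thesis
          using 1 \<open>v' = a' # r'\<close> by (metis append_Nil)
      next
        case 2
        have "r = x # removeAll y r'"
          using Cons.prems(1,3,5) \<open>v' = a' # r'\<close> 2 by simp
        moreover have "r' = y # removeAll y r'"
          using Cons.prems(2,3,4) \<open>v' = a' # r'\<close> 2 \<open>r = x # removeAll y r'\<close> by simp
        ultimately show ?thesis
          using 2 \<open>v' = a' # r'\<close> by (metis append_Nil insert_commute)
      qed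
    qed
  qed
qed

lemma removeAll_merge:
  assumes "distinct u" "distinct w" "x \<in> set u" "y \<in> set w" "x \<notin> set w" "y \<notin> set u"
    and "removeAll x u = removeAll y w"
  obtains v where "distinct v" "removeAll y v = u" "removeAll x v = w"
  using assms
proof (induction u arbitrary: w thesis)
  case Nil
  then show ?case
    by simp
next
  case (Cons a r)
  show ?case
  proof (cases "a = x")
    case True
    then show ?thesis
      using Cons.prems(1)[of "x # w"] Cons.prems(2-8) by auto
  next
    case False
    show ?thesis
    proof (cases w)
      case Nil
      then show ?thesis
        using Cons.prems(5) by simp
    next
      case (Cons b w')
      show ?thesis
      proof (cases "b = y")
        case True
        then show ?thesis
          using Cons.prems(1)[of "y # a # r"] Cons.prems(2-8) \<open>w = b # w'\<close> False by auto
      next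
        case b: False
        then have ab: "a = b" and r: "removeAll x r = removeAll y w'"
          using Cons.prems(8) \<open>w = b # w'\<close> False by auto
        obtain v where v: "distinct v" "removeAll y v = r" "removeAll x v = w'"
          using Cons.IH[of w'] Cons.prems(2-8) \<open>w = b # w'\<close> False b r by auto
        have "x \<noteq> y"
          using Cons.prems(4,7) by auto
        then have "set v \<subseteq> set r \<union> set w'"
          using v(2,3) by auto
        then have "a \<notin> set v"
          using Cons.prems(2,3) \<open>w = b # w'\<close> ab by auto
        then show ?thesis
          using Cons.prems(1)[of "a # v"] Cons.prems(4-7) v ab \<open>w = b # w'\<close> False b by auto
      qed
    qed
  qed
qed

lemma imm_after_iff: "imm_after w k l \<longleftrightarrow> (\<exists>p q. w = p @ X k # l # q)"
  by (simp add: imm_after_def)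

lemma imm_after_set: "imm_after w k l \<Longrightarrow> X k \<in> set w \<and> l \<in> set w"
  by (auto simp: imm_after_iff)

lemma imm_after_unique_letter:
  assumes "distinct w" "imm_after w k l" "imm_after w k l'"
  shows "l = l'"
proof -
  obtain p q where w: "w = p @ X k # l # q"
    using assms(2) by (auto simp: imm_after_iff)
  obtain p' q' where w': "w = p' @ X k # l' # q'"
    using assms(3) by (auto simp: imm_after_iff)
  have "X k \<notin> set p" "X k \<notin> set (l # q)"
    using assms(1) w by auto
  then show ?thesis
    using w w' append_Cons_eq_iff by (metis list.inject)
qed

lemma imm_after_unique_X:
  assumes "distinct w" "imm_after w k l" "imm_after w k' l"
  shows "k = k'"
proof -
  obtain p q where w: "w = (p @ [X k]) @ l # q"
    using assms(2) by (auto simp: imm_after_iff)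
  obtain p' q' where w': "w = (p' @ [X k']) @ l # q'"
    using assms(3) by (auto simp: imm_after_iff)
  have "l \<notin> set (p @ [X k])" "l \<notin> set q"
    using assms(1) w by auto
  then show ?thesis
    using w w' append_Cons_eq_iff by (metis append1_eq_conv letter.inject(2))
qed

lemma imm_after_removeAll:
  "imm_after w k l \<Longrightarrow> l' \<noteq> X k \<Longrightarrow> l' \<noteq> l \<Longrightarrow> imm_after (removeAll l' w) k l"
  unfolding imm_after_iff by force

lemma imm_after_removeAll_cases:
  assumes "distinct w" "imm_after (removeAll l' w) k l"
  shows "imm_after w k l \<or> (\<exists>p q. w = p @ X k # l' # l # q)"
proof (cases "l' \<in> set w")
  case False
  then show ?thesis
    using assms(2) by simp
next
  case True
  then obtain s t where w: "w = s @ l' # t"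
    by (meson split_list)
  then have "removeAll l' w = s @ t"
    using assms(1) by simp
  with assms(2) obtain p q where st: "s @ t = p @ X k # l # q"
    by (auto simp: imm_after_iff)
  then consider (left) r where "p = s @ r" "t = r @ X k # l # q"
    | (right) r where "s = p @ r" "r @ t = X k # l # q"
    by (auto simp: append_eq_append_conv2)
  then show ?thesis
  proof cases
    case left
    then have "w = (s @ l' # r) @ X k # l # q"
      using w by simp
    then show ?thesis
      unfolding imm_after_iff by blast
  next
    case right
    consider "r = []" | "r = [X k]" "t = l # q" | r' where "r = X k # l # r'"
      using right(2) by (cases r rule: remdups_adj.cases) auto
    then show ?thesis
    proof cases
      case 1
      then have "w = (p @ [l']) @ X k # l # q"
        using right w by simp
      then show ?thesis
        unfolding imm_after_iff by blast
    next
      case 2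
      then have "w = p @ X k # l' # l # q"
        using right w by simp
      then show ?thesis
        by blast
    next
      case (3 r')
      then have "w = p @ X k # l # r' @ l' # t"
        using right w by simp
      then show ?thesis
        unfolding imm_after_iff by blast
    qed
  qed
qed

lemma imm_after_removeAll_X:
  assumes "distinct w" "\<not> imm_after w k l" "l \<noteq> X k"
  shows "imm_after (removeAll (X k) w) k' l \<longleftrightarrow> imm_after w k' l"
proof
  assume "imm_after (removeAll (X k) w) k' l"
  then have "imm_after w k' l \<or> (\<exists>p q. w = p @ X k' # X k # l # q)"
    using imm_after_removeAll_cases[OF assms(1)] by blast
  moreover have "\<not> (\<exists>p q. w = p @ X k' # X k # l # q)"
    using assms(2) unfolding imm_after_iff by (metis append.assoc append_Cons append_Nil)
  ultimately show "imm_after w k' l"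
    by blast
next
  assume "imm_after w k' l"
  moreover have "k' \<noteq> k"
    using \<open>imm_after w k' l\<close> assms(2) by blast
  ultimately show "imm_after (removeAll (X k) w) k' l"
    using imm_after_removeAll[of w k' l "X k"] assms(3) by auto
qed

lemma not_imm_after_before:
  assumes "distinct w" "w = p @ l # q" "X k \<in> set q"
  shows "\<not> imm_after w k l"
proof
  assume "imm_after w k l"
  then obtain p' q' where "w = (p' @ [X k]) @ l # q'"
    by (auto simp: imm_after_iff)
  moreover have "l \<notin> set p" "l \<notin> set q"
    using assms(1,2) by auto
  ultimately have "p = p' @ [X k]"
    using assms(2) append_Cons_eq_iff by metis
  then show False
    using assms by auto
qed

section \<open>Shuffle words and coverings\<close>

lemma A_idx_append [simp]: "A_idx (xs @ ys) = A_idx xs @ A_idx ys"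
  and A_idx_Cons [simp]: "A_idx (l # xs) = (case l of A m \<Rightarrow> [m] | X _ \<Rightarrow> []) @ A_idx xs"
  and A_idx_Nil [simp]: "A_idx [] = []"
  by (simp_all add: A_idx_def)

lemma X_idx_append [simp]: "X_idx (xs @ ys) = X_idx xs @ X_idx ys"
  and X_idx_Cons [simp]: "X_idx (l # xs) = (case l of X k \<Rightarrow> [k] | A _ \<Rightarrow> []) @ X_idx xs"
  and X_idx_Nil [simp]: "X_idx [] = []"
  by (simp_all add: X_idx_def)

lemma set_A_idx_filter: "set (A_idx (filter P xs)) \<subseteq> set (A_idx xs)"
  by (induction xs) (auto split: letter.split)

lemma set_X_idx_filter: "set (X_idx (filter P xs)) \<subseteq> set (X_idx xs)"
  by (induction xs) (auto split: letter.split)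

lemma sorted_wrt_A_idx_filter: "sorted_wrt R (A_idx xs) \<Longrightarrow> sorted_wrt R (A_idx (filter P xs))"
  by (induction xs) (use set_A_idx_filter in \<open>fastforce split: letter.split\<close>)+

lemma sorted_wrt_X_idx_filter: "sorted_wrt R (X_idx xs) \<Longrightarrow> sorted_wrt R (X_idx (filter P xs))"
  by (induction xs) (use set_X_idx_filter in \<open>fastforce split: letter.split\<close>)+

lemma A_idx_removeAll_X [simp]: "A_idx (removeAll (X k) xs) = A_idx xs"
  by (induction xs) (auto split: letter.split)

lemma X_idx_removeAll_A [simp]: "X_idx (removeAll (A m) xs) = X_idx xs"
  by (induction xs) (auto split: letter.split)

lemma shuffle_word_removeAll: "shuffle_word M N w \<Longrightarrow> shuffle_word M N (removeAll l w)"
  unfolding shuffle_word_def removeAll_filter_not_eq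
  using sorted_wrt_A_idx_filter sorted_wrt_X_idx_filter by auto

lemma shuffle_word_merge:
  assumes "shuffle_word M N u" "shuffle_word M N w" "distinct v"
    and "removeAll (X k) v = u" "removeAll (A m) v = w"
  shows "shuffle_word M N v"
proof -
  have "set v \<subseteq> set u \<union> set w"
    using assms(4,5) by auto
  with assms show ?thesis
    by (auto simp: shuffle_word_def)
qed

lemma shuffle_word_alphabet: "shuffle_word M N w \<Longrightarrow> l \<in> set w \<Longrightarrow> l \<in> alphabet M N"
  by (auto simp: shuffle_word_def)

lemma cov_removeAll_A:
  assumes "shuffle_word M N w" "A m \<in> set w"
  shows "cov M N w (removeAll (A m) w)"
proof -
  obtain p q where "w = p @ A m # q"
    using assms(2) by (meson split_list)
  moreover from this have "removeAll (A m) w = p @ q"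
    using assms(1) by (simp add: shuffle_word_def)
  ultimately show ?thesis
    using assms(1) shuffle_word_removeAll unfolding cov_def by blast
qed

lemma cov_removeAll_X:
  assumes "shuffle_word M N w" "X k \<in> set w"
  shows "cov M N (removeAll (X k) w) w"
proof -
  obtain p q where "w = p @ X k # q"
    using assms(2) by (meson split_list)
  moreover from this have "removeAll (X k) w = p @ q"
    using assms(1) by (simp add: shuffle_word_def)
  ultimately show ?thesis
    using assms(1) shuffle_word_removeAll unfolding cov_def by metis
qed

lemma covE:
  assumes "cov M N v w"
  obtains (delete) m where "A m \<in> set v" "w = removeAll (A m) v"
    | (insert) k where "X k \<in> set w" "v = removeAll (X k) w"
  using assms unfolding cov_def shuffle_word_def by fastforce

lemma cov_shuffle_word: "cov M N v w \<Longrightarrow> shuffle_word M N v \<and> shuffle_word M N w"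
  by (simp add: cov_def)

lemma cov_keeps_X: "cov M N v w \<Longrightarrow> X k \<in> set v \<Longrightarrow> X k \<in> set w"
  by (erule covE) auto

lemma cov_keeps_no_A: "cov M N v w \<Longrightarrow> A m \<notin> set v \<Longrightarrow> A m \<notin> set w"
  by (erule covE) auto

section \<open>Rank-two intervals\<close>

(* The rank function of W_MN, shifted by M. *)
definition shuffle_rank :: "letter list \<Rightarrow> int" where
  "shuffle_rank w = int (length (X_idx w)) - int (length (A_idx w))"

lemma cov_shuffle_rank: "cov M N v w \<Longrightarrow> shuffle_rank w = shuffle_rank v + 1"
  unfolding cov_def shuffle_rank_def by auto

lemma relpowp_graded:
  assumes "\<And>x y. r x y \<Longrightarrow> f y = f x + 1"
  shows "(r ^^ n) x y \<Longrightarrow> f y = f x + int n"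
  by (induction n arbitrary: y) (auto elim!: relpowp_Suc_E dest: assms)

lemma wle_relpowp:
  assumes "wle M N v w"
  obtains n where "(cov M N ^^ n) v w" "shuffle_rank w = shuffle_rank v + int n"
  using assms relpowp_graded[of "cov M N" shuffle_rank] cov_shuffle_rank
  unfolding wle_def rtranclp_power by blast

lemma wle_shuffle_rank: "wle M N v w \<Longrightarrow> shuffle_rank v \<le> shuffle_rank w"
  by (metis le_add_same_cancel1 of_nat_0_le_iff wle_relpowp)

lemma wle_shuffle_rank_eq: "wle M N v w \<Longrightarrow> shuffle_rank v = shuffle_rank w \<Longrightarrow> v = w"
  by (metis add_cancel_left_right of_nat_eq_0_iff relpowp_0_E wle_relpowp)

lemma rank_two_shuffle_rank: "rank_two M N u w \<Longrightarrow> shuffle_rank w = shuffle_rank u + 2"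
  unfolding rank_two_def using cov_shuffle_rank by fastforce

lemma middles_shuffle_rank: "v \<in> middles M N u w \<Longrightarrow> shuffle_rank v = shuffle_rank u + 1"
  unfolding middles_def using cov_shuffle_rank by blast

lemma interval_rank_two:
  assumes "rank_two M N u w"
  shows "interval M N u w = {u, w} \<union> middles M N u w"
proof
  show "interval M N u w \<subseteq> {u, w} \<union> middles M N u w"
  proof
    fix v assume "v \<in> interval M N u w"
    then have "wle M N u v" "wle M N v w"
      by (simp_all add: interval_def)
    obtain n where n: "(cov M N ^^ n) u v" "shuffle_rank v = shuffle_rank u + int n"
      using \<open>wle M N u v\<close> by (rule wle_relpowp)
    obtain n' where n': "(cov M N ^^ n') v w" "shuffle_rank w = shuffle_rank v + int n'"
      using \<open>wle M N v w\<close> by (rule wle_relpowp)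
    have "n + n' = 2"
      using n(2) n'(2) rank_two_shuffle_rank[OF assms] by linarith
    then consider "n = 0" | "n' = 0" | "n = 1" "n' = 1"
      by linarith
    then show "v \<in> {u, w} \<union> middles M N u w"
      by cases (use n(1) n'(1) in \<open>simp_all add: middles_def eq_OO\<close>)
  qed
  obtain v where "cov M N u v" "cov M N v w"
    using assms by (auto simp: rank_two_def)
  then show "{u, w} \<union> middles M N u w \<subseteq> interval M N u w"
    unfolding interval_def middles_def wle_def
    by (auto dest: cov_shuffle_word intro: converse_rtranclp_into_rtranclp)
qed

lemma bounded_antichain_interval:
  assumes "rank_two M N u w"
  shows "bounded_antichain (interval M N u w) (wle M N) u w"
  unfolding bounded_antichain_def
proof (intro ballI)
  fix a b assume ab: "a \<in> interval M N u w" "b \<in> interval M N u w"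
  show "wle M N a b \<longleftrightarrow> a = b \<or> a = u \<or> b = w"
  proof
    assume le: "wle M N a b"
    show "a = b \<or> a = u \<or> b = w"
    proof (rule ccontr)
      assume "\<not> (a = b \<or> a = u \<or> b = w)"
      then have a: "a \<in> insert w (middles M N u w)" and b: "b \<in> insert u (middles M N u w)"
        and "a \<noteq> b"
        using ab interval_rank_two[OF assms] by auto
      have "shuffle_rank u + 1 \<le> shuffle_rank a"
        using a rank_two_shuffle_rank[OF assms] middles_shuffle_rank[of a] by force
      moreover have "shuffle_rank b \<le> shuffle_rank u + 1"
        using b middles_shuffle_rank[of b] by force
      ultimately show False
        using wle_shuffle_rank[OF le] wle_shuffle_rank_eq[OF le] \<open>a \<noteq> b\<close> by simp
    qed
  next
    assume "a = b \<or> a = u \<or> b = w"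
    with ab show "wle M N a b"
      by (auto simp: interval_def wle_def)
  qed
qed

lemma ord_iso_interval:
  assumes "rank_two M N u w" "middles M N u w = set vs" "distinct vs"
    and "bounded_antichain (set (c # d # ys)) S c d" "distinct (c # d # ys)" "length vs = length ys"
  shows "ord_iso (interval M N u w) (wle M N) (set (c # d # ys)) S"
proof -
  have "interval M N u w = set (u # w # vs)"
    using interval_rank_two[OF assms(1)] assms(2) by simp
  moreover have "distinct (u # w # vs)"
    using assms(1-3) rank_two_shuffle_rank middles_shuffle_rank by fastforce
  ultimately show ?thesis
    using ord_iso_bounded_antichain bounded_antichain_interval[OF assms(1)] assms(4-6) by metis
qed

lemma rank_two_cases:
  assumes "rank_two M N u w"
  obtains (delete_delete) m n where "A m \<in> set u" "A n \<in> set u" "m \<noteq> n"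
      "w = removeAll (A n) (removeAll (A m) u)"
    | (insert_insert) i j where "X i \<in> set w" "X j \<in> set w" "i \<noteq> j"
      "u = removeAll (X i) (removeAll (X j) w)"
    | (delete_insert) m k where "A m \<in> set u" "X k \<in> set w"
      "removeAll (A m) u = removeAll (X k) w"
proof -
  obtain v where uv: "cov M N u v" and vw: "cov M N v w"
    using assms by (auto simp: rank_two_def)
  from uv show thesis
  proof (cases rule: covE)
    case (delete m)
    from vw show thesis
    proof (cases rule: covE)
      case (delete n)
      then show thesis
        using delete_delete \<open>A m \<in> set u\<close> \<open>v = removeAll (A m) u\<close> by auto
    next
      case (insert k)
      then show thesis
        using delete_insert \<open>A m \<in> set u\<close> \<open>v = removeAll (A m) u\<close> by auto
    qed
  next
    case (insert i)
    from vw show thesis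
    proof (cases rule: covE)
      case (delete m)
      then show thesis
        using delete_insert[of m i] \<open>X i \<in> set v\<close> \<open>u = removeAll (X i) v\<close>
        by (auto simp: removeAll_commute[of "A m"])
    next
      case (insert j)
      then show thesis
        using insert_insert \<open>X i \<in> set v\<close> \<open>u = removeAll (X i) v\<close> by auto
    qed
  qed
qed

lemma middles_between:
  assumes "v \<in> middles M N u w"
  shows "set u \<inter> set w \<subseteq> set v" "set v \<subseteq> set u \<union> set w"
proof -
  have uv: "cov M N u v" and vw: "cov M N v w"
    using assms by (simp_all add: middles_def)
  show "set u \<inter> set w \<subseteq> set v"
  proof
    fix l assume l: "l \<in> set u \<inter> set w"
    show "l \<in> set v"
    proof (rule ccontr)
      assume "l \<notin> set v"
      with uv l obtain p where "l = A p"
        by (cases rule: covE) auto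
      then show False
        using cov_keeps_no_A[OF vw] l \<open>l \<notin> set v\<close> by auto
    qed
  qed
  show "set v \<subseteq> set u \<union> set w"
  proof
    fix l assume l: "l \<in> set v"
    show "l \<in> set u \<union> set w"
    proof (rule ccontr)
      assume "l \<notin> set u \<union> set w"
      with uv l obtain i where "l = X i"
        by (cases rule: covE) auto
      then show False
        using cov_keeps_X[OF vw] l \<open>l \<notin> set u \<union> set w\<close> by auto
    qed
  qed
qed

lemma middles_delete_delete:
  assumes "shuffle_word M N u" "A m \<in> set u" "A n \<in> set u" "m \<noteq> n"
    and w: "w = removeAll (A n) (removeAll (A m) u)"
  shows "middles M N u w = {removeAll (A m) u, removeAll (A n) u}"
proof
  show "middles M N u w \<subseteq> {removeAll (A m) u, removeAll (A n) u}"
  proof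
    fix v assume v: "v \<in> middles M N u w"
    then have "cov M N u v"
      by (simp add: middles_def)
    then show "v \<in> {removeAll (A m) u, removeAll (A n) u}"
    proof (cases rule: covE)
      case (delete p)
      then have "p = m \<or> p = n"
        using middles_between(1)[OF v] w by auto
      then show ?thesis
        using \<open>v = removeAll (A p) u\<close> by auto
    next
      case (insert i)
      then show ?thesis
        using middles_between(2)[OF v] w by auto
    qed
  qed
  have "cov M N (removeAll (A m) u) w"
    unfolding w by (rule cov_removeAll_A) (use assms in \<open>simp_all add: shuffle_word_removeAll\<close>)
  moreover have "cov M N (removeAll (A n) u) w"
    unfolding w removeAll_commute[of "A n"]
    by (rule cov_removeAll_A) (use assms in \<open>simp_all add: shuffle_word_removeAll\<close>)
  moreover have "cov M N u (removeAll (A m) u)" "cov M N u (removeAll (A n) u)"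
    using assms by (simp_all add: cov_removeAll_A)
  ultimately show "{removeAll (A m) u, removeAll (A n) u} \<subseteq> middles M N u w"
    by (simp add: middles_def)
qed

lemma middles_insert_insert:
  assumes "shuffle_word M N w" "X i \<in> set w" "X j \<in> set w" "i \<noteq> j"
    and u: "u = removeAll (X i) (removeAll (X j) w)"
  shows "middles M N u w = {removeAll (X j) w, removeAll (X i) w}"
proof
  show "middles M N u w \<subseteq> {removeAll (X j) w, removeAll (X i) w}"
  proof
    fix v assume v: "v \<in> middles M N u w"
    then have "cov M N v w"
      by (simp add: middles_def)
    then show "v \<in> {removeAll (X j) w, removeAll (X i) w}"
    proof (cases rule: covE)
      case (delete p)
      then show ?thesis
        using middles_between(2)[OF v] u by auto
    next
      case (insert s)
      then have "s = i \<or> s = j"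
        using middles_between(1)[OF v] u by auto
      then show ?thesis
        using \<open>v = removeAll (X s) w\<close> by auto
    qed
  qed
  have "cov M N u (removeAll (X j) w)"
    unfolding u by (rule cov_removeAll_X) (use assms in \<open>simp_all add: shuffle_word_removeAll\<close>)
  moreover have "cov M N u (removeAll (X i) w)"
    unfolding u removeAll_commute[of "X i"]
    by (rule cov_removeAll_X) (use assms in \<open>simp_all add: shuffle_word_removeAll\<close>)
  moreover have "cov M N (removeAll (X j) w) w" "cov M N (removeAll (X i) w) w"
    using assms by (simp_all add: cov_removeAll_X)
  ultimately show "{removeAll (X j) w, removeAll (X i) w} \<subseteq> middles M N u w"
    by (simp add: middles_def)
qed

definition insertion_middles ::
  "nat \<Rightarrow> nat \<Rightarrow> letter list \<Rightarrow> letter list \<Rightarrow> nat \<Rightarrow> nat \<Rightarrow> letter list set" where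
  "insertion_middles M N u w k m =
     {v. shuffle_word M N v \<and> removeAll (X k) v = u \<and> removeAll (A m) v = w}"

context
  fixes M N :: nat and u w :: "letter list" and k m :: nat
  assumes u: "shuffle_word M N u" "A m \<in> set u"
    and w: "shuffle_word M N w" "X k \<in> set w"
    and uw: "removeAll (A m) u = removeAll (X k) w"
begin

lemma X_notin_u: "X k \<notin> set u" and A_notin_w: "A m \<notin> set w"
proof -
  have "set (removeAll (A m) u) = set (removeAll (X k) w)"
    using uw by simp
  then show "X k \<notin> set u" "A m \<notin> set w"
    by auto
qed

lemma middles_delete_insert:
  "middles M N u w = insert (removeAll (A m) u) (insertion_middles M N u w k m)"
proof
  show "middles M N u w \<subseteq> insert (removeAll (A m) u) (insertion_middles M N u w k m)"
  proof
    fix v assume v: "v \<in> middles M N u w"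
    then have uv: "cov M N u v" and vw: "cov M N v w"
      by (simp_all add: middles_def)
    have uw_eq: "set u - {A m} = set w - {X k}"
      using arg_cong[OF uw, of set] by simp
    from uv show "v \<in> insert (removeAll (A m) u) (insertion_middles M N u w k m)"
    proof (cases rule: covE)
      case (delete p)
      then have "p = m"
        using middles_between(1)[OF v] uw_eq by auto
      then show ?thesis
        using \<open>v = removeAll (A p) u\<close> by simp
    next
      case (insert i)
      then have "i = k"
        using middles_between(2)[OF v] uw_eq by auto
      have "A m \<in> set v"
        using u(2) \<open>u = removeAll (X i) v\<close> by simp
      from vw show ?thesis
      proof (cases rule: covE)
        case (delete r)
        then have "r = m"
          using \<open>A m \<in> set v\<close> A_notin_w by auto
        then show ?thesis
          using uv \<open>i = k\<close> insert delete by (simp add: insertion_middles_def cov_def)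
      next
        case (insert j)
        then show ?thesis
          using \<open>A m \<in> set v\<close> A_notin_w by simp
      qed
    qed
  qed
  have "removeAll (A m) u \<in> middles M N u w"
    using cov_removeAll_A[OF u] cov_removeAll_X[OF w] uw by (simp add: middles_def)
  moreover have "insertion_middles M N u w k m \<subseteq> middles M N u w"
  proof
    fix v assume "v \<in> insertion_middles M N u w k m"
    then have v: "shuffle_word M N v" "removeAll (X k) v = u" "removeAll (A m) v = w"
      by (simp_all add: insertion_middles_def)
    then have "X k \<in> set v" "A m \<in> set v"
      using u(2) w(2) by auto
    then show "v \<in> middles M N u w"
      using v by (auto simp: middles_def intro: cov_removeAll_A cov_removeAll_X)
  qed
  ultimately show "insert (removeAll (A m) u) (insertion_middles M N u w k m) \<subseteq> middles M N u w"
    by simp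
qed

lemma insertion_middles_nonempty: "insertion_middles M N u w k m \<noteq> {}"
proof -
  obtain v where "distinct v" "removeAll (X k) v = u" "removeAll (A m) v = w"
    using removeAll_merge[of u w "A m" "X k"] u w uw X_notin_u A_notin_w
    by (auto simp: shuffle_word_def)
  then have "v \<in> insertion_middles M N u w k m"
    using shuffle_word_merge[OF u(1) w(1)] by (simp add: insertion_middles_def)
  then show ?thesis
    by blast
qed

lemma insertion_middles_swap:
  assumes "v \<in> insertion_middles M N u w k m" "v' \<in> insertion_middles M N u w k m" "v \<noteq> v'"
  obtains p q where "u = p @ A m # q" "w = p @ X k # q"
    "{v, v'} = {p @ A m # X k # q, p @ X k # A m # q}"
proof -
  have "distinct v" "distinct v'"
    using assms(1,2) by (simp_all add: insertion_middles_def shuffle_word_def)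
  moreover have "removeAll (A m) v = removeAll (A m) v'" "removeAll (X k) v = removeAll (X k) v'"
    using assms(1,2) by (simp_all add: insertion_middles_def)
  ultimately obtain p q where pq: "{v, v'} = {p @ A m # X k # q, p @ X k # A m # q}"
    using removeAll_eq_swap[of v v' "A m" "X k"] assms(3) by auto
  then have "distinct (p @ A m # X k # q)" and v: "v \<in> {p @ A m # X k # q, p @ X k # A m # q}"
    using \<open>distinct v\<close> \<open>distinct v'\<close> by (auto simp: doubleton_eq_iff)
  moreover have "removeAll (X k) v = u" "removeAll (A m) v = w"
    using assms(1) by (simp_all add: insertion_middles_def)
  ultimately have "u = p @ A m # q" "w = p @ X k # q"
    by auto
  then show ?thesis
    using that pq by blast
qed

lemma insertion_middles_adjacent:
  assumes "u = p @ A m # q" "w = p @ X k # q"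
  shows "insertion_middles M N u w k m = {p @ A m # X k # q, p @ X k # A m # q}"
proof -
  have "distinct u"
    using u(1) by (simp add: shuffle_word_def)
  then have notin: "A m \<notin> set p" "A m \<notin> set q" "X k \<notin> set p" "X k \<notin> set q"
    using assms(1) X_notin_u by auto
  have g1: "p @ A m # X k # q \<in> insertion_middles M N u w k m"
    using shuffle_word_merge[OF u(1) w(1), of "p @ A m # X k # q" k m] assms notin \<open>distinct u\<close>
    by (auto simp: insertion_middles_def)
  moreover have "p @ X k # A m # q \<in> insertion_middles M N u w k m"
    using shuffle_word_merge[OF u(1) w(1), of "p @ X k # A m # q" k m] assms notin \<open>distinct u\<close>
    by (auto simp: insertion_middles_def)
  moreover have "v \<in> {p @ A m # X k # q, p @ X k # A m # q}"
    if v: "v \<in> insertion_middles M N u w k m" for v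
  proof (cases "v = p @ A m # X k # q")
    case False
    then obtain p' q' where "u = p' @ A m # q'"
      "{v, p @ A m # X k # q} = {p' @ A m # X k # q', p' @ X k # A m # q'}"
      using insertion_middles_swap[OF v g1 False] by metis
    moreover from this(1) have "p' = p" "q' = q"
      using assms(1) notin append_Cons_eq_iff by metis+
    ultimately show ?thesis
      by (auto simp: doubleton_eq_iff)
  qed simp
  ultimately show ?thesis
    by blast
qed

lemma insertion_middles_singleton:
  assumes "\<nexists>p q. u = p @ A m # q \<and> w = p @ X k # q"
  obtains v where "insertion_middles M N u w k m = {v}" "\<not> imm_after v k (A m)"
proof -
  obtain v where v: "v \<in> insertion_middles M N u w k m"
    using insertion_middles_nonempty by blast
  then have "insertion_middles M N u w k m = {v}"
    using insertion_middles_swap[OF v] assms by blast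
  moreover have "\<not> imm_after v k (A m)"
  proof
    assume "imm_after v k (A m)"
    then obtain p q where "v = p @ X k # A m # q"
      by (auto simp: imm_after_iff)
    moreover have "distinct v" "removeAll (X k) v = u" "removeAll (A m) v = w"
      using v by (simp_all add: insertion_middles_def shuffle_word_def)
    ultimately have "u = p @ A m # q" "w = p @ X k # q"
      by auto
    then show False
      using assms by blast
  qed
  ultimately show ?thesis
    using that by blast
qed

end

section \<open>The labelling\<close>

(* The label of deleting l from w when the letters x_k with used k have already labelled a
   deletion: rule (xa) if l follows an unused x_k in w, rule (a) otherwise. *)
definition deletion_label :: "(nat \<Rightarrow> bool) \<Rightarrow> letter list \<Rightarrow> letter \<Rightarrow> letter" where
  "deletion_label used w l =
     (if \<exists>k. imm_after w k l \<and> \<not> used k then X (THE k. imm_after w k l \<and> \<not> used k) else l)"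

lemma deletion_label_cong:
  "(\<And>k. imm_after w k l \<and> \<not> used k \<longleftrightarrow> imm_after w' k l \<and> \<not> used' k) \<Longrightarrow>
     deletion_label used w l = deletion_label used' w' l"
  unfolding deletion_label_def by presburger

lemma deletion_label_X:
  "distinct w \<Longrightarrow> imm_after w k l \<Longrightarrow> \<not> used k \<Longrightarrow> deletion_label used w l = X k"
  unfolding deletion_label_def by (auto intro: imm_after_unique_X)

lemma deletion_label_cases:
  assumes "distinct w"
  shows "deletion_label used w l = l \<or> (\<exists>k. imm_after w k l \<and> deletion_label used w l = X k)"
proof (cases "\<exists>k. imm_after w k l \<and> \<not> used k")
  case True
  then show ?thesis
    using deletion_label_X[OF assms] by blast
next
  case False
  then show ?thesis
    unfolding deletion_label_def by auto
qed

lemma deletion_label_in_set: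
  "distinct w \<Longrightarrow> l \<in> set w \<Longrightarrow> deletion_label used w l \<in> set w"
  using deletion_label_cases imm_after_set by metis

lemma deletion_label_swap:
  assumes "distinct w" "m \<noteq> n"
  shows "deletion_label used w (A m)
           = deletion_label (\<lambda>k. used k \<or> imm_after w k (A n)) (removeAll (A n) w) (A m)"
proof (rule deletion_label_cong)
  fix k
  have "imm_after w k (A m) \<Longrightarrow> \<not> imm_after w k (A n)"
    using imm_after_unique_letter[OF assms(1)] assms(2) by blast
  moreover have "imm_after w k (A m)"
    if "imm_after (removeAll (A n) w) k (A m)" "\<not> imm_after w k (A n)"
    using imm_after_removeAll_cases[OF assms(1) that(1)] that(2)
    by (metis append.assoc append_Cons append_Nil imm_after_iff)
  ultimately show "imm_after w k (A m) \<and> \<not> used k \<longleftrightarrow>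
      imm_after (removeAll (A n) w) k (A m) \<and> \<not> (used k \<or> imm_after w k (A n))"
    using imm_after_removeAll assms(2) by auto
qed

lemma deleted_removeAll: "l \<in> set w \<Longrightarrow> deleted w (removeAll l w) = l"
  unfolding deleted_def by (auto intro: the_equality)

lemma inserted_removeAll: "l \<in> set w \<Longrightarrow> inserted (removeAll l w) w = l"
  unfolding inserted_def by (auto intro: the_equality)

lemma del_after_delete:
  "c ! Suc i = removeAll l (c ! i) \<Longrightarrow> l \<in> set (c ! i) \<Longrightarrow> del_after c i k \<longleftrightarrow> imm_after (c ! i) k l"
  unfolding del_after_def by (simp add: deleted_removeAll length_removeAll_less)

lemma del_after_insert:
  "c ! i = removeAll (X k') (c ! Suc i) \<Longrightarrow> X k' \<in> set (c ! Suc i) \<Longrightarrow> \<not> del_after c i k"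
  unfolding del_after_def by (metis length_removeAll_less order.asym)

lemma label_insert:
  assumes "c ! i = removeAll (X k) (c ! Suc i)" "X k \<in> set (c ! Suc i)"
  shows "label c i = X k"
  using assms by (simp add: label_def inserted_removeAll length_removeAll_less)

lemma label_delete:
  assumes "c ! Suc i = removeAll l (c ! i)" "l \<in> set (c ! i)"
  shows "label c i = deletion_label (\<lambda>k. \<exists>j<i. del_after c j k) (c ! i) l"
  using assms del_after_delete[OF assms]
  by (auto simp: label_def deletion_label_def deleted_removeAll length_removeAll_less less_not_sym)

definition xa_used :: "letter list list \<Rightarrow> nat \<Rightarrow> bool" where
  "xa_used c k \<longleftrightarrow> (\<exists>j < length c - 1. del_after c j k)"

lemma chain_ft_rtranclp:
  assumes "chain_ft M N c a b" "j < length c"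
  shows "(cov M N)\<^sup>*\<^sup>* (c ! j) b"
  using assms(2)
proof (induction "length c - 1 - j" arbitrary: j)
  case 0
  then have "j = length c - 1"
    by simp
  then show ?case
    using assms(1) last_conv_nth[of c] by (auto simp: chain_ft_def)
next
  case (Suc d)
  then have "(cov M N)\<^sup>*\<^sup>* (c ! Suc j) b" "cov M N (c ! j) (c ! Suc j)"
    using assms(1) by (auto simp: chain_ft_def)
  then show ?case
    by (rule converse_rtranclp_into_rtranclp[rotated])
qed

lemma xa_used_in_last:
  assumes "chain_ft M N c a u" "xa_used c k"
  shows "X k \<in> set u"
proof -
  obtain j where j: "j < length c - 1" "del_after c j k"
    using assms(2) by (auto simp: xa_used_def)
  have "(cov M N)\<^sup>*\<^sup>* (c ! j) u"
    using chain_ft_rtranclp[OF assms(1)] j(1) by simp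
  moreover have "X k \<in> set (c ! j)"
    using j(2) by (auto simp: del_after_def dest: imm_after_set)
  ultimately show ?thesis
    by (induction rule: rtranclp_induct) (auto dest: cov_keeps_X)
qed

section \<open>Labelled rank-two intervals\<close>

(* The maximal chain lo @ v # hi passes through u, v, w at positions i, Suc i, Suc (Suc i),
   where length lo = Suc i. *)
context
  fixes M N :: nat and lo hi :: "letter list list" and a b u w :: "letter list"
  assumes lo: "chain_ft M N lo a u" and hi: "chain_ft M N hi w b"
begin

lemma nth_lo_v_hi:
  assumes "length lo = Suc i"
  shows "(lo @ v # hi) ! i = u" "(lo @ v # hi) ! Suc i = v" "(lo @ v # hi) ! Suc (Suc i) = w"
  using assms lo hi last_conv_nth[of lo] hd_conv_nth[of hi]
  by (auto simp: chain_ft_def nth_append)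

lemma used_lo_v_hi:
  "length lo = Suc i \<Longrightarrow> (\<lambda>k. \<exists>j<i. del_after (lo @ v # hi) j k) = xa_used lo"
  unfolding xa_used_def del_after_def by (auto simp: nth_append)

lemma used_lo_v_hi_Suc:
  "length lo = Suc i \<Longrightarrow>
     (\<lambda>k. \<exists>j<Suc i. del_after (lo @ v # hi) j k) = (\<lambda>k. xa_used lo k \<or> del_after (lo @ v # hi) i k)"
  using used_lo_v_hi[of i v, symmetric] unfolding less_Suc_eq by auto

lemma ind_labels_lo_v_hi:
  "length lo = Suc i \<Longrightarrow> ind_labels lo v hi = (label (lo @ v # hi) i, label (lo @ v # hi) (Suc i))"
  by (simp add: ind_labels_def)

lemma length_lo_Suc: obtains i where "length lo = Suc i"
  using lo by (cases lo) (auto simp: chain_ft_def)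

lemma ind_labels_delete_delete:
  assumes "l \<in> set u" "v = removeAll l u" "l' \<in> set v" "w = removeAll l' v"
  shows "ind_labels lo v hi = (deletion_label (xa_used lo) u l,
                               deletion_label (\<lambda>k. xa_used lo k \<or> imm_after u k l) v l')"
proof -
  obtain i where i: "length lo = Suc i"
    by (rule length_lo_Suc)
  let ?c = "lo @ v # hi"
  have "label ?c i = deletion_label (xa_used lo) u l"
    using label_delete[of ?c i l] assms(1) assms(2)[symmetric]
    by (simp add: nth_lo_v_hi[OF i] used_lo_v_hi[OF i])
  moreover have "label ?c (Suc i) = deletion_label (\<lambda>k. xa_used lo k \<or> imm_after u k l) v l'"
    using label_delete[of ?c "Suc i" l'] del_after_delete[of ?c i l]
      assms(1,3) assms(2,4)[symmetric] by (simp add: nth_lo_v_hi[OF i] used_lo_v_hi_Suc[OF i])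
  ultimately show ?thesis
    by (simp add: ind_labels_lo_v_hi[OF i])
qed

lemma ind_labels_delete_insert:
  assumes "l \<in> set u" "v = removeAll l u" "X k \<in> set w" "v = removeAll (X k) w"
  shows "ind_labels lo v hi = (deletion_label (xa_used lo) u l, X k)"
proof -
  obtain i where i: "length lo = Suc i"
    by (rule length_lo_Suc)
  let ?c = "lo @ v # hi"
  have "label ?c i = deletion_label (xa_used lo) u l"
    using label_delete[of ?c i l] assms(1) assms(2)[symmetric]
    by (simp add: nth_lo_v_hi[OF i] used_lo_v_hi[OF i])
  moreover have "label ?c (Suc i) = X k"
    using label_insert[of ?c "Suc i" k] assms(3) assms(4)[symmetric]
    by (simp add: nth_lo_v_hi[OF i])
  ultimately show ?thesis
    by (simp add: ind_labels_lo_v_hi[OF i])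
qed

lemma ind_labels_insert_delete:
  assumes "X k \<in> set v" "u = removeAll (X k) v" "l \<in> set v" "w = removeAll l v"
  shows "ind_labels lo v hi = (X k, deletion_label (xa_used lo) v l)"
proof -
  obtain i where i: "length lo = Suc i"
    by (rule length_lo_Suc)
  let ?c = "lo @ v # hi"
  have "label ?c i = X k"
    using label_insert[of ?c i k] assms(1) assms(2)[symmetric] by (simp add: nth_lo_v_hi[OF i])
  moreover have "label ?c (Suc i) = deletion_label (xa_used lo) v l"
    using label_delete[of ?c "Suc i" l] del_after_insert[of ?c i k]
      assms(1,3) assms(2,4)[symmetric] by (simp add: nth_lo_v_hi[OF i] used_lo_v_hi_Suc[OF i])
  ultimately show ?thesis
    by (simp add: ind_labels_lo_v_hi[OF i])
qed

lemma ind_labels_insert_insert: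
  assumes "X k \<in> set v" "u = removeAll (X k) v" "X k' \<in> set w" "v = removeAll (X k') w"
  shows "ind_labels lo v hi = (X k, X k')"
proof -
  obtain i where i: "length lo = Suc i"
    by (rule length_lo_Suc)
  show ?thesis
    using label_insert[of "lo @ v # hi" i k] label_insert[of "lo @ v # hi" "Suc i" k']
      assms(1,3) assms(2,4)[symmetric] by (simp add: ind_labels_lo_v_hi[OF i] nth_lo_v_hi[OF i])
qed

end

definition labelled_C2xC2 ::
  "nat \<Rightarrow> nat \<Rightarrow> letter list \<Rightarrow> letter list \<Rightarrow> letter list list \<Rightarrow> letter list list \<Rightarrow> bool" where
  "labelled_C2xC2 M N u w lo hi \<longleftrightarrow> ord_iso (interval M N u w) (wle M N) UNIV C2xC2_le \<and>
     (\<exists>v1 v2 l1 l2. middles M N u w = {v1, v2} \<and> v1 \<noteq> v2 \<and>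
        l1 \<in> alphabet M N \<and> l2 \<in> alphabet M N \<and> l1 \<noteq> l2 \<and>
        ind_labels lo v1 hi = (l1, l2) \<and> ind_labels lo v2 hi = (l2, l1))"

definition labelled_Pi3 ::
  "nat \<Rightarrow> nat \<Rightarrow> letter list \<Rightarrow> letter list \<Rightarrow> letter list list \<Rightarrow> letter list list \<Rightarrow> bool" where
  "labelled_Pi3 M N u w lo hi \<longleftrightarrow> ord_iso (interval M N u w) (wle M N) Pi3 refines \<and>
     (\<exists>g1 g2 g3 j l. middles M N u w = {g1, g2, g3} \<and> distinct [g1, g2, g3] \<and>
        X j \<in> alphabet M N \<and> l \<in> alphabet M N - {X j} \<and>
        ind_labels lo g1 hi = (X j, l) \<and> ind_labels lo g2 hi = (l, X j) \<and>
        ind_labels lo g3 hi = (X j, X j))"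

lemma labelled_C2xC2I:
  assumes "rank_two M N u w" "middles M N u w = {v1, v2}" "v1 \<noteq> v2"
    and "l1 \<in> alphabet M N" "l2 \<in> alphabet M N" "l1 \<noteq> l2"
    and "ind_labels lo v1 hi = (l1, l2)" "ind_labels lo v2 hi = (l2, l1)"
  shows "labelled_C2xC2 M N u w lo hi"
proof -
  have "ord_iso (interval M N u w) (wle M N) UNIV C2xC2_le"
    unfolding UNIV_bool_pair
    by (rule ord_iso_interval[where vs = "[v1, v2]"])
      (use assms(1-3) C2xC2_bounded_antichain in auto)
  then show ?thesis
    using assms unfolding labelled_C2xC2_def by blast
qed

lemma labelled_Pi3I:
  assumes "rank_two M N u w" "middles M N u w = {g1, g2, g3}" "distinct [g1, g2, g3]"
    and "X j \<in> alphabet M N" "l \<in> alphabet M N - {X j}"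
    and "ind_labels lo g1 hi = (X j, l)" "ind_labels lo g2 hi = (l, X j)"
    and "ind_labels lo g3 hi = (X j, X j)"
  shows "labelled_Pi3 M N u w lo hi"
proof -
  have "ord_iso (interval M N u w) (wle M N) Pi3 refines"
    using Pi3_bounded_antichain Pi3_distinct unfolding Pi3_eq
    by (intro ord_iso_interval[where vs = "[g1, g2, g3]"]) (use assms(1-3) in auto)
  then show ?thesis
    using assms unfolding labelled_Pi3_def by blast
qed

context
  fixes M N :: nat and lo hi :: "letter list list" and a b u w :: "letter list"
  assumes lo: "chain_ft M N lo a u" and hi: "chain_ft M N hi w b"
    and rank_two: "rank_two M N u w"
begin

lemma rank_two_delete_delete:
  assumes u: "shuffle_word M N u" "A m \<in> set u" "A n \<in> set u" "m \<noteq> n"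
    and w: "w = removeAll (A n) (removeAll (A m) u)"
  shows "labelled_C2xC2 M N u w lo hi"
proof -
  define v1 v2 where "v1 = removeAll (A m) u" and "v2 = removeAll (A n) u"
  define l1 l2 where "l1 = deletion_label (xa_used lo) u (A m)"
    and "l2 = deletion_label (xa_used lo) u (A n)"
  have du: "distinct u"
    using u(1) by (simp add: shuffle_word_def)
  have v1: "A n \<in> set v1" "w = removeAll (A n) v1" and v2: "A m \<in> set v2" "w = removeAll (A m) v2"
    using u w by (simp_all add: v1_def v2_def removeAll_commute)
  have "ind_labels lo v1 hi
          = (l1, deletion_label (\<lambda>k. xa_used lo k \<or> imm_after u k (A m)) v1 (A n))"
    using ind_labels_delete_delete[OF lo hi u(2) v1_def v1] by (simp add: l1_def)
  also have "deletion_label (\<lambda>k. xa_used lo k \<or> imm_after u k (A m)) v1 (A n) = l2"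
    unfolding l2_def v1_def using deletion_label_swap[OF du, of n m] u(4) by simp
  finally have L1: "ind_labels lo v1 hi = (l1, l2)" .
  have "ind_labels lo v2 hi
          = (l2, deletion_label (\<lambda>k. xa_used lo k \<or> imm_after u k (A n)) v2 (A m))"
    using ind_labels_delete_delete[OF lo hi u(3) v2_def v2] by (simp add: l2_def)
  also have "deletion_label (\<lambda>k. xa_used lo k \<or> imm_after u k (A n)) v2 (A m) = l1"
    unfolding l1_def v2_def using deletion_label_swap[OF du, of m n] u(4) by simp
  finally have L2: "ind_labels lo v2 hi = (l2, l1)" .
  have "l1 = A m \<or> (\<exists>k. imm_after u k (A m) \<and> l1 = X k)"
    and "l2 = A n \<or> (\<exists>k. imm_after u k (A n) \<and> l2 = X k)"
    using deletion_label_cases[OF du] unfolding l1_def l2_def by blast+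
  then have "l1 \<noteq> l2"
    using imm_after_unique_letter[OF du] u(4) by fastforce
  moreover have "l1 \<in> alphabet M N" "l2 \<in> alphabet M N"
    using deletion_label_in_set[OF du] shuffle_word_alphabet[OF u(1)] u(2,3)
    unfolding l1_def l2_def by blast+
  moreover have "v1 \<noteq> v2"
    using v1(1) by (auto simp: v2_def)
  ultimately show ?thesis
    using labelled_C2xC2I[OF rank_two middles_delete_delete[OF u w, folded v1_def v2_def]] L1 L2
    by blast
qed

lemma rank_two_insert_insert:
  assumes w: "shuffle_word M N w" "X i \<in> set w" "X j \<in> set w" "i \<noteq> j"
    and u: "u = removeAll (X i) (removeAll (X j) w)"
  shows "labelled_C2xC2 M N u w lo hi"
proof -
  define v1 v2 where "v1 = removeAll (X j) w" and "v2 = removeAll (X i) w"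
  have v1: "X i \<in> set v1" "u = removeAll (X i) v1" and v2: "X j \<in> set v2" "u = removeAll (X j) v2"
    using u w by (simp_all add: v1_def v2_def removeAll_commute)
  have "ind_labels lo v1 hi = (X i, X j)"
    using ind_labels_insert_insert[OF lo hi v1 w(3) v1_def] .
  moreover have "ind_labels lo v2 hi = (X j, X i)"
    using ind_labels_insert_insert[OF lo hi v2 w(2) v2_def] .
  moreover have "v1 \<noteq> v2"
    using v1(1) by (auto simp: v2_def)
  moreover have "X i \<in> alphabet M N" "X j \<in> alphabet M N"
    using shuffle_word_alphabet[OF w(1)] w(2,3) by blast+
  ultimately show ?thesis
    using labelled_C2xC2I[OF rank_two middles_insert_insert[OF w u, folded v1_def v2_def]] w(4)
    by blast
qed

context
  fixes m k :: nat
  assumes u: "shuffle_word M N u" "A m \<in> set u"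
    and w: "shuffle_word M N w" "X k \<in> set w"
    and uw: "removeAll (A m) u = removeAll (X k) w"
begin

lemma ind_labels_insertion_middle:
  assumes v: "v \<in> insertion_middles M N u w k m"
  shows "ind_labels lo v hi
           = (X k, if imm_after v k (A m) then X k else deletion_label (xa_used lo) u (A m))"
proof -
  have v': "distinct v" "removeAll (X k) v = u" "removeAll (A m) v = w"
    using v by (simp_all add: insertion_middles_def shuffle_word_def)
  then have "X k \<in> set v" "A m \<in> set v"
    using u(2) w(2) by auto
  then have "ind_labels lo v hi = (X k, deletion_label (xa_used lo) v (A m))"
    using ind_labels_insert_delete[OF lo hi] v'(2,3) by simp
  moreover have "\<not> xa_used lo k"
    using xa_used_in_last[OF lo] X_notin_u[OF u w uw] by blast
  moreover have "deletion_label (xa_used lo) v (A m) = deletion_label (xa_used lo) u (A m)"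
    if "\<not> imm_after v k (A m)"
    using imm_after_removeAll_X[OF v'(1) that] v'(2) by (auto intro: deletion_label_cong)
  ultimately show ?thesis
    using deletion_label_X[OF v'(1)] by auto
qed

lemma rank_two_delete_insert: "labelled_C2xC2 M N u w lo hi \<or> labelled_Pi3 M N u w lo hi"
proof -
  define l where "l = deletion_label (xa_used lo) u (A m)"
  have "distinct u"
    using u(1) by (simp add: shuffle_word_def)
  have Lb: "ind_labels lo (removeAll (A m) u) hi = (l, X k)"
    using ind_labels_delete_insert[OF lo hi u(2) refl w(2) uw] by (simp add: l_def)
  have l: "l \<in> alphabet M N - {X k}"
    using deletion_label_in_set[OF \<open>distinct u\<close> u(2), of "xa_used lo"]
      shuffle_word_alphabet[OF u(1)] X_notin_u[OF u w uw]
    unfolding l_def by auto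
  have "X k \<in> alphabet M N"
    using shuffle_word_alphabet[OF w] .
  have b_notin: "removeAll (A m) u \<notin> insertion_middles M N u w k m"
    using X_notin_u[OF u w uw] w(2) by (auto simp: insertion_middles_def)
  show ?thesis
  proof (cases "\<exists>p q. u = p @ A m # q \<and> w = p @ X k # q")
    case True
    (* a_m and x_k occupy the same slot, so both orders of x_k and a_m give a middle element *)
    then obtain p q where pq: "u = p @ A m # q" "w = p @ X k # q"
      by blast
    define g1 g3 where "g1 = p @ A m # X k # q" and "g3 = p @ X k # A m # q"
    have V: "insertion_middles M N u w k m = {g1, g3}"
      using insertion_middles_adjacent[OF u w uw pq] by (simp add: g1_def g3_def)
    have "distinct g1"
      using \<open>distinct u\<close> X_notin_u[OF u w uw] pq(1) by (auto simp: g1_def)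
    then have "\<not> imm_after g1 k (A m)"
      using not_imm_after_before[of g1 p "A m" "X k # q" k] by (simp add: g1_def)
    then have L1: "ind_labels lo g1 hi = (X k, l)"
      using ind_labels_insertion_middle V by (simp add: l_def)
    have "imm_after g3 k (A m)"
      unfolding g3_def imm_after_iff by blast
    then have L3: "ind_labels lo g3 hi = (X k, X k)"
      using ind_labels_insertion_middle V by simp
    have "middles M N u w = {g1, removeAll (A m) u, g3}"
      using middles_delete_insert[OF u w uw] V by (simp add: insert_commute)
    moreover have "g1 \<noteq> g3"
      by (simp add: g1_def g3_def)
    then have "distinct [g1, removeAll (A m) u, g3]"
      using b_notin V by auto
    ultimately have "labelled_Pi3 M N u w lo hi"
      using labelled_Pi3I[OF rank_two _ _ \<open>X k \<in> alphabet M N\<close> l L1 Lb L3] by blast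
    then show ?thesis ..
  next
    case False
    then obtain v where V: "insertion_middles M N u w k m = {v}" and "\<not> imm_after v k (A m)"
      using insertion_middles_singleton[OF u w uw] by blast
    then have Lv: "ind_labels lo v hi = (X k, l)"
      using ind_labels_insertion_middle by (simp add: l_def)
    have "middles M N u w = {removeAll (A m) u, v}"
      using middles_delete_insert[OF u w uw] V by simp
    moreover have "removeAll (A m) u \<noteq> v"
      using b_notin V by auto
    ultimately have "labelled_C2xC2 M N u w lo hi"
      using labelled_C2xC2I[OF rank_two _ _ _ \<open>X k \<in> alphabet M N\<close> _ Lb Lv] l by blast
    then show ?thesis ..
  qed
qed

end

end

theorem lemma3p2:
  fixes M N :: nat and u w :: "letter list" and lo hi :: "letter list list"
  assumes "rank_two M N u w"
    and "chain_ft M N lo (bottom M) u"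
    and "chain_ft M N hi w (top_word N)"
  shows "(ord_iso (interval M N u w) (wle M N) UNIV C2xC2_le \<and>
          (\<exists>v1 v2 l1 l2. middles M N u w = {v1, v2} \<and> v1 \<noteq> v2 \<and>
             l1 \<in> alphabet M N \<and> l2 \<in> alphabet M N \<and> l1 \<noteq> l2 \<and>
             ind_labels lo v1 hi = (l1, l2) \<and> ind_labels lo v2 hi = (l2, l1)))
       \<or> (ord_iso (interval M N u w) (wle M N) Pi3 refines \<and>
          (\<exists>g1 g2 g3 j l. middles M N u w = {g1, g2, g3} \<and> distinct [g1, g2, g3] \<and>
             X j \<in> alphabet M N \<and> l \<in> alphabet M N - {X j} \<and>
             ind_labels lo g1 hi = (X j, l) \<and> ind_labels lo g2 hi = (l, X j) \<and>
             ind_labels lo g3 hi = (X j, X j)))"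
proof -
  note case_lemmas = rank_two_delete_delete[OF assms(2,3,1)] rank_two_insert_insert[OF assms(2,3,1)]
    rank_two_delete_insert[OF assms(2,3,1)]
  have "shuffle_word M N u" "shuffle_word M N w"
    using assms(1) by (auto simp: rank_two_def cov_def)
  with assms(1) have "labelled_C2xC2 M N u w lo hi \<or> labelled_Pi3 M N u w lo hi"
    by (cases rule: rank_two_cases) (use case_lemmas in blast)+
  then show ?thesis
    unfolding labelled_C2xC2_def labelled_Pi3_def .
qed

end
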